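(* For all ideals $\mathcal{I}$ and $\mathcal{J}$ on $\omega$, $\rho^{(\mathrm{FIN}\otimes\mathcal{I})}\not\approx_K\rho_{\mathcal{J}}$ (for any choice of almost disjoint family and enumeration in the definition of $\rho^{(\mathrm{FIN}\otimes\mathcal{I})}$).
   Context: An ideal on a set $X$: $\mathcal{J}\subseteq\mathcal{P}(X)$ with $\emptyset\in\mathcal{J}$, $X\notin\mathcal{J}$, closed under finite unions and subsets, containing all finite sets; $\mathcal{J}^+=\mathcal{P}(X)\setminus\mathcal{J}$. For an ideal $\mathcal{J}$ on $\omega$, $\rho_{\mathcal{J}}\colon\mathcal{J}^+\to[\omega]^\omega$, $\rho_{\mathcal{J}}(A)=A$ (domain family $\mathcal{J}^+\subseteq[\omega]^\omega$). $\mathrm{FIN}\otimes\mathcal{I}$ is the ideal on $\omega\times\omega$: $A\in\mathrm{FIN}\otimes\mathcal{I}$ iff $\{n:\{k:(n,k)\in A\}\notin\mathcal{I}\}$ is finite. Definition of $\rho^{(\mathrm{FIN}\otimes\mathcal{I})}$: let $\mathcal{A}=\{A_\alpha:\alpha<\mathfrak{c}\}$ be an almost disjoint family on $\omega$ (pairwise distinct infinite sets with pairwise finite intersections), $(\mathrm{FIN}\otimes\mathcal{I})^+=\{B_\alpha:\alpha<\mathfrak{c}\}$ an enumeration, $P_n=\{n\}\times\omega$, $\overline{\mathcal{A}}=\{A\setminus K:A\in\mathcal{A},K\in[\omega]^{<\omega}\}$, and $\rho^{(\mathrm{FIN}\otimes\mathcal{I})}(A_\alpha\setminus K)=B_\alpha\setminus\bigcup\{P_n:n<\max(K\cap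 A_\alpha)\}$, with $\max\emptyset=0$; it maps $\overline{\mathcal{A}}$ into $[\omega\times\omega]^\omega$. Katětov order for functions $\rho_i\colon\mathcal{F}_i\to[\Lambda_i]^\omega$ with $\mathcal{F}_i\subseteq[\Omega_i]^\omega$: $\rho_2\leq_K\rho_1$ if there is $f\colon\Lambda_1\to\Lambda_2$ such that for every $F_1\in\mathcal{F}_1$ there is $F_2\in\mathcal{F}_2$ such that for every finite $K_1\subseteq\Omega_1$ there is a finite $K_2\subseteq\Omega_2$ with $\rho_2(F_2\setminus K_2)\subseteq f[\rho_1(F_1\setminus K_1)]$. $\rho_1\approx_K\rho_2$ means $\rho_1\leq_K\rho_2$ and $\rho_2\leq_K\rho_1$. *)

theory Defs
  imports Main
begin

definition is_ideal :: "'a set \<Rightarrow> 'a set set \<Rightarrow> bool" where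
  "is_ideal X J \<longleftrightarrow> J \<subseteq> Pow X \<and> {} \<in> J \<and> X \<notin> J
     \<and> (\<forall>A\<in>J. \<forall>B\<in>J. A \<union> B \<in> J)
     \<and> (\<forall>A\<in>J. \<forall>B. B \<subseteq> A \<longrightarrow> B \<in> J)
     \<and> (\<forall>F. finite F \<and> F \<subseteq> X \<longrightarrow> F \<in> J)"

definition ideal_pos :: "'a set set \<Rightarrow> 'a set set" where
  "ideal_pos J = UNIV - J"

definition FIN_prod :: "nat set set \<Rightarrow> (nat \<times> nat) set set" where
  "FIN_prod I = {A. finite {n. {k. (n, k) \<in> A} \<notin> I}}"

text \<open>Katetov order for functions rho_i defined on families F_i:
  katetov_le F2 rho2 F1 rho1 means rho2 \<le>_K rho1.\<close>
definition katetov_le ::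
  "'o2 set set \<Rightarrow> ('o2 set \<Rightarrow> 'l2 set) \<Rightarrow> 'o1 set set \<Rightarrow> ('o1 set \<Rightarrow> 'l1 set) \<Rightarrow> bool" where
  "katetov_le F2 rho2 F1 rho1 \<longleftrightarrow>
     (\<exists>f :: 'l1 \<Rightarrow> 'l2. \<forall>X1\<in>F1. \<exists>X2\<in>F2. \<forall>K1. finite K1 \<longrightarrow>
        (\<exists>K2. finite K2 \<and> rho2 (X2 - K2) \<subseteq> f ` rho1 (X1 - K1)))"

definition katetov_equiv ::
  "'o1 set set \<Rightarrow> ('o1 set \<Rightarrow> 'l1 set) \<Rightarrow> 'o2 set set \<Rightarrow> ('o2 set \<Rightarrow> 'l2 set) \<Rightarrow> bool" where
  "katetov_equiv F1 rho1 F2 rho2 \<longleftrightarrow> katetov_le F1 rho1 F2 rho2 \<and> katetov_le F2 rho2 F1 rho1"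

definition almost_disjoint_family :: "('c \<Rightarrow> nat set) \<Rightarrow> bool" where
  "almost_disjoint_family A \<longleftrightarrow> inj A \<and> (\<forall>a. infinite (A a))
     \<and> (\<forall>a b. a \<noteq> b \<longrightarrow> finite (A a \<inter> A b))"

definition AD_closure :: "('c \<Rightarrow> nat set) \<Rightarrow> nat set set" where
  "AD_closure A = {A a - K | a K. finite K}"

definition max0 :: "nat set \<Rightarrow> nat" where
  "max0 S = (if S = {} then 0 else Max S)"

text \<open>rho^(FIN\<otimes>I)(A_alpha - K) = B_alpha minus the columns P_n for n < max(K \<inter> A_alpha).
  Note K \<inter> A_alpha = A_alpha - (A_alpha - K), so this is well-defined.\<close>
definition rho_FIN :: "('c \<Rightarrow> nat set) \<Rightarrow> ('c \<Rightarrow> (nat \<times> nat) set) \<Rightarrow> nat set \<Rightarrow> (nat \<times> nat) set" where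
  "rho_FIN A B X =
     (let a = (THE a. \<exists>K. finite K \<and> X = A a - K)
      in B a - {p. fst p < max0 (A a - X)})"

end

theory Submission
  imports Defs
begin

text \<open>Let \<open>f\<close> and \<open>g\<close> witness the two Katetov reductions and colour each point \<open>p\<close> of
  \<open>\<omega> \<times> \<omega>\<close> by the column of \<open>f (g p)\<close>. If some colour is \<open>\<I>\<close>-positive in infinitely many
  columns, its points form a \<open>FIN \<otimes> \<I>\<close>-positive set; otherwise keeping, in each column, the
  colours from the first \<open>\<I>\<close>-positive one on gives a positive set in which every colour occurs
  in only finitely many columns. So some positive \<open>S = B\<^sub>\<alpha>\<close> meets all colours but one in
  finitely many columns only. Removing a point \<open>x\<close> from \<open>A\<^sub>\<alpha>\<close> removes the columns below \<open>x\<close>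
  from \<open>B\<^sub>\<alpha>\<close>, so \<open>g\<close> maps \<open>A\<^sub>\<alpha>\<close> to a \<open>\<J>\<close>-positive \<open>X\<close> almost contained in the image of
  every tail of \<open>S\<close>. Then all columns of \<open>f[X]\<close> but one are finite, so \<open>f[X] \<in> FIN \<otimes> \<I>\<close>;
  but \<open>f\<close> makes \<open>f[X]\<close> contain a value of \<open>rho_FIN A B\<close>, and these are all positive.\<close>

lemma ideal_not_carrier:
  assumes "is_ideal X I"
  shows "X \<notin> I"
  using assms unfolding is_ideal_def by blast

lemma ideal_finite:
  assumes "is_ideal X I" "finite F" "F \<subseteq> X"
  shows "F \<in> I"
  using assms unfolding is_ideal_def by blast

lemma ideal_subset:
  assumes "is_ideal X I" "S \<in> I" "T \<subseteq> S"
  shows "T \<in> I"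
  using assms unfolding is_ideal_def by blast

lemma ideal_Un:
  assumes "is_ideal X I" "S \<in> I" "T \<in> I"
  shows "S \<union> T \<in> I"
  using assms unfolding is_ideal_def by blast

lemma ideal_UN:
  assumes I: "is_ideal X I" and "finite C" "\<And>c. c \<in> C \<Longrightarrow> F c \<in> I"
  shows "(\<Union>c\<in>C. F c) \<in> I"
  using assms(2,3)
proof (induction C rule: finite_induct)
  case empty
  then show ?case using ideal_finite[OF I] by simp
next
  case (insert c C)
  then show ?case using ideal_Un[OF I] by simp
qed

lemma FIN_prod_subset:
  assumes I: "is_ideal UNIV I" and "S \<in> FIN_prod I" "T \<subseteq> S"
  shows "T \<in> FIN_prod I"
proof -
  have "{n. {k. (n, k) \<in> T} \<notin> I} \<subseteq> {n. {k. (n, k) \<in> S} \<notin> I}"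
  proof (rule subsetI, rule CollectI)
    fix n assume n: "n \<in> {n. {k. (n, k) \<in> T} \<notin> I}"
    show "{k. (n, k) \<in> S} \<notin> I"
    proof
      assume "{k. (n, k) \<in> S} \<in> I"
      moreover have "{k. (n, k) \<in> T} \<subseteq> {k. (n, k) \<in> S}"
        using \<open>T \<subseteq> S\<close> by auto
      ultimately have "{k. (n, k) \<in> T} \<in> I"
        by (rule ideal_subset[OF I])
      with n show False by simp
    qed
  qed
  moreover have "finite {n. {k. (n, k) \<in> S} \<notin> I}"
    using \<open>S \<in> FIN_prod I\<close> unfolding FIN_prod_def by simp
  ultimately have "finite {n. {k. (n, k) \<in> T} \<notin> I}"
    by (rule finite_subset)
  then show ?thesis unfolding FIN_prod_def by simp
qed

lemma not_FIN_prod_Diff_initial_columns: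
  assumes "S \<notin> FIN_prod I"
  shows "S - {p. fst p < m} \<notin> FIN_prod I"
proof
  assume "S - {p. fst p < m} \<in> FIN_prod I"
  have "{n. {k. (n, k) \<in> S} \<notin> I} \<subseteq> {n. {k. (n, k) \<in> S - {p. fst p < m}} \<notin> I} \<union> {..<m}"
    by auto
  moreover have "finite ({n. {k. (n, k) \<in> S - {p. fst p < m}} \<notin> I} \<union> {..<m})"
    using \<open>S - {p. fst p < m} \<in> FIN_prod I\<close> unfolding FIN_prod_def by simp
  ultimately have "finite {n. {k. (n, k) \<in> S} \<notin> I}"
    by (rule finite_subset)
  with assms show False unfolding FIN_prod_def by simp
qed

lemma FIN_prod_if_columns_finite:
  assumes "is_ideal UNIV I" "\<And>n. n \<noteq> n0 \<Longrightarrow> finite {k. (n, k) \<in> Y}"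
  shows "Y \<in> FIN_prod I"
proof -
  have "{k. (n, k) \<in> Y} \<in> I" if "n \<noteq> n0" for n
    using ideal_finite[OF assms(1) assms(2)[OF that] subset_UNIV] .
  then have "{n. {k. (n, k) \<in> Y} \<notin> I} \<subseteq> {n0}"
    by blast
  then have "finite {n. {k. (n, k) \<in> Y} \<notin> I}"
    by (rule finite_subset) simp
  then show ?thesis unfolding FIN_prod_def by simp
qed

lemma FIN_prod_pos_monochromatic:
  assumes "infinite {n. {k. \<phi> (n, k) = c} \<notin> I}"
  shows "{p. \<phi> p = c} \<notin> FIN_prod I"
  using assms unfolding FIN_prod_def by simp

text \<open>\<open>r n\<close> is the least colour that is \<open>\<I>\<close>-positive in column \<open>n\<close>, capped at \<open>n\<close>: such a
  colour need not exist, since \<open>\<I>\<close> need not be closed under countable unions.\<close>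

lemma exists_FIN_prod_pos_colours_in_finitely_many_columns:
  fixes \<phi> :: "nat \<times> nat \<Rightarrow> nat"
  assumes I: "is_ideal UNIV I"
    and sparse: "\<And>c. finite {n. {k. \<phi> (n, k) = c} \<notin> I}"
  shows "\<exists>S. S \<notin> FIN_prod I \<and> (\<forall>c. finite {n. \<exists>k. (n, k) \<in> S \<and> \<phi> (n, k) = c})"
proof -
  define r where "r n = (LEAST c. c = n \<or> {k. \<phi> (n, k) = c} \<notin> I)" for n
  have below_r: "{k. \<phi> (n, k) = c} \<in> I" if "c < r n" for c n
    using not_less_Least[OF that[unfolded r_def]] by simp
  have r_cases: "r n = n \<or> {k. \<phi> (n, k) = r n} \<notin> I" for n
    unfolding r_def by (rule LeastI[where P = "\<lambda>c. c = n \<or> {k. \<phi> (n, k) = c} \<notin> I" and k = n]) simp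
  define S where "S = {p. r (fst p) \<le> \<phi> p}"
  have "{k. (n, k) \<in> S} \<notin> I" for n
  proof
    assume "{k. (n, k) \<in> S} \<in> I"
    moreover have "(\<Union>c<r n. {k. \<phi> (n, k) = c}) \<in> I"
      by (rule ideal_UN[OF I]) (simp_all add: below_r)
    ultimately have "{k. (n, k) \<in> S} \<union> (\<Union>c<r n. {k. \<phi> (n, k) = c}) \<in> I"
      by (rule ideal_Un[OF I])
    moreover have "{k. (n, k) \<in> S} \<union> (\<Union>c<r n. {k. \<phi> (n, k) = c}) = UNIV"
      by (auto simp: S_def not_le)
    ultimately show False using ideal_not_carrier[OF I] by simp
  qed
  then have pos: "S \<notin> FIN_prod I" unfolding FIN_prod_def by simp
  have fin: "finite {n. \<exists>k. (n, k) \<in> S \<and> \<phi> (n, k) = c}" for c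
  proof -
    have "{n. \<exists>k. (n, k) \<in> S \<and> \<phi> (n, k) = c} \<subseteq> {n. r n \<le> c}"
      by (auto simp: S_def)
    also have "\<dots> \<subseteq> {..c} \<union> (\<Union>c'\<in>{..c}. {n. {k. \<phi> (n, k) = c'} \<notin> I})"
    proof
      fix n assume "n \<in> {n. r n \<le> c}"
      with r_cases[of n] show "n \<in> {..c} \<union> (\<Union>c'\<in>{..c}. {n. {k. \<phi> (n, k) = c'} \<notin> I})"
        by auto
    qed
    finally show ?thesis
      by (rule finite_subset) (simp add: sparse)
  qed
  show ?thesis
  proof (intro exI conjI allI)
    show "S \<notin> FIN_prod I" by (rule pos)
    show "finite {n. \<exists>k. (n, k) \<in> S \<and> \<phi> (n, k) = c}" for c by (rule fin)
  qed
qed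

lemma exists_FIN_prod_pos_colours_in_finitely_many_columns_but_one:
  fixes \<phi> :: "nat \<times> nat \<Rightarrow> nat"
  assumes "is_ideal UNIV I"
  shows "\<exists>S c0. S \<notin> FIN_prod I \<and>
    (\<forall>c. c \<noteq> c0 \<longrightarrow> finite {n. \<exists>k. (n, k) \<in> S \<and> \<phi> (n, k) = c})"
proof (cases "\<exists>c. infinite {n. {k. \<phi> (n, k) = c} \<notin> I}")
  case True
  then obtain c where "infinite {n. {k. \<phi> (n, k) = c} \<notin> I}" by blast
  then have pos: "{p. \<phi> p = c} \<notin> FIN_prod I"
    by (rule FIN_prod_pos_monochromatic)
  have fin: "finite {n. \<exists>k. (n, k) \<in> {p. \<phi> p = c} \<and> \<phi> (n, k) = c'}" if "c' \<noteq> c" for c'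
  proof -
    have "{n. \<exists>k. (n, k) \<in> {p. \<phi> p = c} \<and> \<phi> (n, k) = c'} = {}"
      using that by blast
    then show ?thesis by (simp only: finite.emptyI)
  qed
  show ?thesis
    by (rule exI[of _ "{p. \<phi> p = c}"], rule exI[of _ c]) (use pos fin in blast)
next
  case False
  then have "finite {n. {k. \<phi> (n, k) = c} \<notin> I}" for c
    by blast
  then obtain S where "S \<notin> FIN_prod I" "\<forall>c. finite {n. \<exists>k. (n, k) \<in> S \<and> \<phi> (n, k) = c}"
    using exists_FIN_prod_pos_colours_in_finitely_many_columns[OF assms] by blast
  then show ?thesis by blast
qed

lemma FIN_prod_if_almost_in_tail_images:
  fixes S :: "(nat \<times> 'b) set"
  assumes I: "is_ideal UNIV I"
    and colours: "\<And>c. c \<noteq> c0 \<Longrightarrow> finite {n. \<exists>k. (n, k) \<in> S \<and> fst (h (n, k)) = c}"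
    and tails: "\<And>N. finite (Y - h ` (S \<inter> {p. N \<le> fst p}))"
  shows "Y \<in> FIN_prod I"
proof (rule FIN_prod_if_columns_finite[OF I])
  fix c assume "c \<noteq> c0"
  then have "finite {n. \<exists>k. (n, k) \<in> S \<and> fst (h (n, k)) = c}"
    by (rule colours)
  then obtain N where N: "\<forall>n\<in>{n. \<exists>k. (n, k) \<in> S \<and> fst (h (n, k)) = c}. n < N"
    by (auto simp: finite_nat_set_iff_bounded)
  have "{k. (c, k) \<in> Y} \<subseteq> snd ` (Y - h ` (S \<inter> {p. N \<le> fst p}))"
  proof
    fix k assume k: "k \<in> {k. (c, k) \<in> Y}"
    have "(c, k) \<notin> h ` (S \<inter> {p. N \<le> fst p})"
    proof
      assume "(c, k) \<in> h ` (S \<inter> {p. N \<le> fst p})"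
      then obtain p where "p \<in> S" "N \<le> fst p" "h p = (c, k)"
        by auto
      then have "fst p \<in> {n. \<exists>k. (n, k) \<in> S \<and> fst (h (n, k)) = c}"
        by (cases p) auto
      with N \<open>N \<le> fst p\<close> show False by auto
    qed
    with k have "(c, k) \<in> Y - h ` (S \<inter> {p. N \<le> fst p})"
      by simp
    then show "k \<in> snd ` (Y - h ` (S \<inter> {p. N \<le> fst p}))"
      by (rule image_eqI[rotated]) simp
  qed
  then show "finite {k. (c, k) \<in> Y}"
    using finite_imageI[OF tails] by (rule finite_subset)
qed

lemma almost_disjoint_family_infinite:
  assumes "almost_disjoint_family A"
  shows "infinite (A a)"
  using assms unfolding almost_disjoint_family_def by blast

lemma almost_disjoint_family_finite_Int:
  assumes "almost_disjoint_family A" "a \<noteq> b"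
  shows "finite (A a \<inter> A b)"
  using assms unfolding almost_disjoint_family_def by blast

lemma almost_disjoint_family_Diff_eq:
  assumes AD: "almost_disjoint_family A" and "finite K" "finite K'" "A a - K = A b - K'"
  shows "b = a"
proof (rule ccontr)
  assume "b \<noteq> a"
  have "A a \<subseteq> (A a \<inter> A b) \<union> K"
    using assms(4) by blast
  moreover have "finite ((A a \<inter> A b) \<union> K)"
    using almost_disjoint_family_finite_Int[OF AD] \<open>b \<noteq> a\<close> \<open>finite K\<close> by simp
  ultimately have "finite (A a)"
    by (rule finite_subset)
  with almost_disjoint_family_infinite[OF AD] show False by contradiction
qed

lemma rho_FIN_Diff:
  assumes AD: "almost_disjoint_family A" and "finite K"
  shows "rho_FIN A B (A a - K) = B a - {p. fst p < max0 (A a \<inter> K)}"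
proof -
  have "(THE a'. \<exists>K'. finite K' \<and> A a - K = A a' - K') = a"
  proof (rule the_equality)
    show "\<exists>K'. finite K' \<and> A a - K = A a - K'"
      using \<open>finite K\<close> by blast
  next
    fix a' assume "\<exists>K'. finite K' \<and> A a - K = A a' - K'"
    then show "a' = a"
      using almost_disjoint_family_Diff_eq[OF AD \<open>finite K\<close>] by blast
  qed
  moreover have "A a - (A a - K) = A a \<inter> K" by blast
  ultimately show ?thesis by (simp add: rho_FIN_def Let_def)
qed

lemma rho_FIN_not_in_FIN_prod:
  assumes "almost_disjoint_family A" "range B \<subseteq> ideal_pos (FIN_prod I)"
    and "X \<in> AD_closure A" "finite K"
  shows "rho_FIN A B (X - K) \<notin> FIN_prod I"
proof -
  obtain a K0 where "X = A a - K0" "finite K0"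
    using assms(3) unfolding AD_closure_def by blast
  then have "X - K = A a - (K0 \<union> K)" "finite (K0 \<union> K)"
    using \<open>finite K\<close> by auto
  then have "rho_FIN A B (X - K) = B a - {p. fst p < max0 (A a \<inter> (K0 \<union> K))}"
    using rho_FIN_Diff[OF assms(1)] by simp
  moreover have "B a \<notin> FIN_prod I"
    using assms(2) unfolding ideal_pos_def by blast
  ultimately show ?thesis by (simp add: not_FIN_prod_Diff_initial_columns)
qed

lemma katetov_le_rho_FIN_id_image_not_in_FIN_prod:
  assumes I: "is_ideal UNIV I" and AD: "almost_disjoint_family A"
    and B: "range B \<subseteq> ideal_pos (FIN_prod I)"
    and "katetov_le (AD_closure A) (rho_FIN A B) F (\<lambda>X. X)"
  shows "\<exists>f :: nat \<Rightarrow> nat \<times> nat. \<forall>X\<in>F. f ` X \<notin> FIN_prod I"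
proof -
  obtain f :: "nat \<Rightarrow> nat \<times> nat" where f: "\<forall>X\<in>F. \<exists>X2\<in>AD_closure A. \<forall>K1. finite K1 \<longrightarrow>
      (\<exists>K2. finite K2 \<and> rho_FIN A B (X2 - K2) \<subseteq> f ` (X - K1))"
    using assms(4) unfolding katetov_le_def by blast
  have "f ` X \<notin> FIN_prod I" if "X \<in> F" for X
  proof
    from f \<open>X \<in> F\<close> have "\<exists>X2\<in>AD_closure A. \<forall>K1. finite K1 \<longrightarrow>
        (\<exists>K2. finite K2 \<and> rho_FIN A B (X2 - K2) \<subseteq> f ` (X - K1))"
      by (rule bspec)
    then obtain X2 where X2: "X2 \<in> AD_closure A" and reduce: "\<forall>K1. finite K1 \<longrightarrow>
        (\<exists>K2. finite K2 \<and> rho_FIN A B (X2 - K2) \<subseteq> f ` (X - K1))" ..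
    then obtain K2 where "finite K2" and sub: "rho_FIN A B (X2 - K2) \<subseteq> f ` X"
      using reduce[rule_format, OF finite.emptyI] by auto
    assume "f ` X \<in> FIN_prod I"
    then have "rho_FIN A B (X2 - K2) \<in> FIN_prod I"
      using sub by (rule FIN_prod_subset[OF I])
    with rho_FIN_not_in_FIN_prod[OF AD B X2 \<open>finite K2\<close>] show False
      by contradiction
  qed
  then show ?thesis by blast
qed

text \<open>Choosing \<open>K = {x}\<close> with \<open>x \<in> A\<^sub>\<alpha>\<close> large cuts off all columns of \<open>B\<^sub>\<alpha>\<close> below \<open>x\<close>.\<close>

lemma katetov_le_id_rho_FIN_almost_covers_tails:
  assumes AD: "almost_disjoint_family A"
    and "katetov_le F (\<lambda>X. X) (AD_closure A) (rho_FIN A B)"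
  shows "\<exists>g :: nat \<times> nat \<Rightarrow> nat. \<forall>a. \<exists>X\<in>F. \<forall>N. finite (X - g ` (B a \<inter> {p. N \<le> fst p}))"
proof -
  obtain g :: "nat \<times> nat \<Rightarrow> nat" where g: "\<forall>X1\<in>AD_closure A. \<exists>X\<in>F. \<forall>K1. finite K1 \<longrightarrow>
      (\<exists>K2. finite K2 \<and> X - K2 \<subseteq> g ` rho_FIN A B (X1 - K1))"
    using assms(2) unfolding katetov_le_def by blast
  have "\<exists>X\<in>F. \<forall>N. finite (X - g ` (B a \<inter> {p. N \<le> fst p}))" for a
  proof -
    have "A a \<in> AD_closure A"
      unfolding AD_closure_def by (rule CollectI, rule exI[of _ a], rule exI[of _ "{}"]) simp
    with g obtain X where "X \<in> F" and X: "\<And>K1. finite K1 \<Longrightarrow>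
        \<exists>K2. finite K2 \<and> X - K2 \<subseteq> g ` rho_FIN A B (A a - K1)"
      by blast
    have "finite (X - g ` (B a \<inter> {p. N \<le> fst p}))" for N
    proof -
      have "\<not> A a \<subseteq> {..<N}"
        by (meson almost_disjoint_family_infinite[OF AD] finite_lessThan finite_subset)
      then obtain x where x: "x \<in> A a" "N \<le> x"
        by (meson lessThan_iff not_le subsetI)
      obtain K2 where "finite K2" and K2: "X - K2 \<subseteq> g ` rho_FIN A B (A a - {x})"
        using X[of "{x}"] by blast
      have "rho_FIN A B (A a - {x}) = B a - {p. fst p < x}"
        using rho_FIN_Diff[OF AD, of "{x}" B a] x by (simp add: max0_def)
      also have "\<dots> \<subseteq> B a \<inter> {p. N \<le> fst p}"
        using x by auto
      finally have "X - K2 \<subseteq> g ` (B a \<inter> {p. N \<le> fst p})"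
        using K2 by (meson image_mono subset_trans)
      then have "X - g ` (B a \<inter> {p. N \<le> fst p}) \<subseteq> K2"
        by blast
      then show ?thesis using \<open>finite K2\<close> by (rule finite_subset)
    qed
    with \<open>X \<in> F\<close> show ?thesis by blast
  qed
  then show ?thesis by blast
qed

theorem proposition5p4:
  fixes I J :: "nat set set"
    and A :: "nat set \<Rightarrow> nat set"
    and B :: "nat set \<Rightarrow> (nat \<times> nat) set"
  assumes "is_ideal UNIV I"
    and "is_ideal UNIV J"
    and "almost_disjoint_family A"
    and "bij_betw B UNIV (ideal_pos (FIN_prod I))"
  shows "\<not> katetov_equiv (AD_closure A) (rho_FIN A B) (ideal_pos J) (\<lambda>X. X)"
proof
  assume "katetov_equiv (AD_closure A) (rho_FIN A B) (ideal_pos J) (\<lambda>X. X)"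
  then have le_FIN: "katetov_le (AD_closure A) (rho_FIN A B) (ideal_pos J) (\<lambda>X. X)"
    and le_J: "katetov_le (ideal_pos J) (\<lambda>X. X) (AD_closure A) (rho_FIN A B)"
    unfolding katetov_equiv_def by simp_all
  have range_B: "range B = ideal_pos (FIN_prod I)"
    using assms(4) by (rule bij_betw_imp_surj_on)
  obtain f where f: "\<forall>X\<in>ideal_pos J. f ` X \<notin> FIN_prod I"
    using katetov_le_rho_FIN_id_image_not_in_FIN_prod[OF assms(1,3) equalityD1[OF range_B] le_FIN]
    by blast
  obtain g where g: "\<forall>a. \<exists>X\<in>ideal_pos J. \<forall>N. finite (X - g ` (B a \<inter> {p. N \<le> fst p}))"
    using katetov_le_id_rho_FIN_almost_covers_tails[OF assms(3) le_J] by blast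
  obtain S c0 where "S \<notin> FIN_prod I"
    and colours: "\<And>c. c \<noteq> c0 \<Longrightarrow> finite {n. \<exists>k. (n, k) \<in> S \<and> fst ((f \<circ> g) (n, k)) = c}"
    using exists_FIN_prod_pos_colours_in_finitely_many_columns_but_one[OF assms(1),
        of "\<lambda>p. fst ((f \<circ> g) p)"]
    by blast
  then have "S \<in> range B"
    unfolding range_B ideal_pos_def by simp
  with g obtain X where "X \<in> ideal_pos J" and X: "\<And>N. finite (X - g ` (S \<inter> {p. N \<le> fst p}))"
    by blast
  have "finite (f ` X - (f \<circ> g) ` (S \<inter> {p. N \<le> fst p}))" for N
  proof (rule finite_subset)
    show "f ` X - (f \<circ> g) ` (S \<inter> {p. N \<le> fst p}) \<subseteq> f ` (X - g ` (S \<inter> {p. N \<le> fst p}))"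
      by auto
  qed (rule finite_imageI[OF X])
  with assms(1) colours have "f ` X \<in> FIN_prod I"
    by (rule FIN_prod_if_almost_in_tail_images)
  with f \<open>X \<in> ideal_pos J\<close> show False by blast
qed

end
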